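(* Let $\mathcal{R}=(\mathcal{F},R)$ be a 3-DCTRS. If for every rule $\ell\to r\Leftarrow c$ in $R$ the partial grounding $c^{\downarrow \mathrm{Var}(\ell)}$ of $c$ is $\overline{\mathcal{R}}$-feasible, then the transformation $\mathcal{U}$ preserves $\to_{\mathcal{R}}$-irreducibility of $\mathcal{R}$.
   Context: An oriented CTRS $\mathcal{R}=(\mathcal{F},R)$ has rules $\ell\to r\Leftarrow s_1\approx t_1,\dots,s_n\approx t_n$ ($\ell$ not a variable) where conditions are reachability tests: $s\to_{\mathcal{R}}t$ iff there are a rule, a position $p$ and a substitution $\sigma$ with $s|_p=\sigma(\ell)$, $\sigma(s_j)\to^*_{\mathcal{R}}\sigma(t_j)$ for all $j$, and $t=s[\sigma(r)]_p$. It is deterministic (a DCTRS) if for each rule and $1\le i\le n$, $\mathrm{Var}(s_i)\subseteq\mathrm{Var}(\ell)\cup\bigcup_{j<i}\mathrm{Var}(t_j)$; it is a 3-CTRS if $\mathrm{Var}(r)\subseteq\mathrm{Var}(\ell)\cup\mathrm{Var}(c)$ for each rule. The theory $\overline{\mathcal{R}}$ is the first-order theory axiomatizing $\to$ and $\to^*$ (reflexivity of $\to^*$, $x\to y\wedge y\to^* z\Rightarrow x\to^*z$, closure of $\to$ under all argument positions, each rule as the implication $s_1\to^*t_1\wedge\dots\wedge s_n\to^* t_n\Rightarrow \ell\to r$), so that $\overline{\mathcal{R}}\vdash s\to^* t$ iff $s\to^*_{\mathcal{R}}t$. For a set $V$ of variables, the partial grounding $c^{\downarrow V}$ replaces every variable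 $x\in V$ occurring in $c$ by a fresh constant $c_x$ (distinct variables giving distinct constants not in $\mathcal{F}$). A sequence of conditions $s_1\approx t_1,\dots,s_n\approx t_n$ is $\overline{\mathcal{R}}$-feasible if there is a substitution $\sigma$ with $\overline{\mathcal{R}}\vdash\sigma(s_j)\to^*\sigma(t_j)$ for all $j$. Transformation $\mathcal{U}$: each conditional rule $\alpha:\ell\to r\Leftarrow s_1\approx t_1,\dots,s_n\approx t_n$ ($n\ge1$) becomes $\ell\to U^\alpha_1(s_1,\vec x_1)$, $U^\alpha_{i-1}(t_{i-1},\vec x_{i-1})\to U^\alpha_i(s_i,\vec x_i)$ ($2\le i\le n$), $U^\alpha_n(t_n,\vec x_n)\to r$, with fresh symbols $U^\alpha_i$ and $\vec x_i$ a sequence of the variables in $\mathrm{Var}(\ell)\cup\mathrm{Var}(t_1)\cup\dots\cup\mathrm{Var}(t_{i-1})$; unconditional rules are kept; $\mathcal{U}(\mathcal{R})$ is the resulting TRS. $\mathcal{U}$ preserves $\to_{\mathcal{R}}$-irreducibility if every $\to_{\mathcal{R}}$-irreducible term over $\mathcal{F}$ and variables is $\to_{\mathcal{U}(\mathcal{R})}$-irreducible. *)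

theory Defs
  imports Main
begin

datatype ('f, 'v) "term" = Var 'v | Fun 'f "('f, 'v) term list"

primrec vars_term :: "('f, 'v) term \<Rightarrow> 'v set" where
  "vars_term (Var x) = {x}"
| "vars_term (Fun f ts) = \<Union> (set (map vars_term ts))"

primrec funas_term :: "('f, 'v) term \<Rightarrow> ('f \<times> nat) set" where
  "funas_term (Var x) = {}"
| "funas_term (Fun f ts) = insert (f, length ts) (\<Union> (set (map funas_term ts)))"

primrec subst :: "('v \<Rightarrow> ('f, 'w) term) \<Rightarrow> ('f, 'v) term \<Rightarrow> ('f, 'w) term" where
  "subst \<sigma> (Var x) = \<sigma> x"
| "subst \<sigma> (Fun f ts) = Fun f (map (subst \<sigma>) ts)"

primrec map_funs :: "('f \<Rightarrow> 'g) \<Rightarrow> ('f, 'v) term \<Rightarrow> ('g, 'v) term" where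
  "map_funs h (Var x) = Var x"
| "map_funs h (Fun f ts) = Fun (h f) (map (map_funs h) ts)"

text \<open>A conditional rule  l \<rightarrow> r \<Leftarrow> s1 \<approx> t1, ..., sn \<approx> tn  is the triple (l, r, [(s1,t1),...,(sn,tn)]).
  Unconditional rules have the empty condition list.\<close>
type_synonym ('f, 'v) crule =
  "('f, 'v) term \<times> ('f, 'v) term \<times> (('f, 'v) term \<times> ('f, 'v) term) list"

text \<open>These clauses are exactly the axioms of the theory R-bar (reflexivity of \<rightarrow>*,
  x \<rightarrow> y \<and> y \<rightarrow>* z \<Rightarrow> x \<rightarrow>* z, closure of \<rightarrow> under argument positions, and each rule as an
  implication), so derivability in R-bar coincides with these predicates.\<close>
inductive rstep :: "('f, 'v) crule set \<Rightarrow> ('f, 'v) term \<Rightarrow> ('f, 'v) term \<Rightarrow> bool"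
  and rsteps :: "('f, 'v) crule set \<Rightarrow> ('f, 'v) term \<Rightarrow> ('f, 'v) term \<Rightarrow> bool"
  for R :: "('f, 'v) crule set" where
  rule: "(l, r, cs) \<in> R \<Longrightarrow>
         (\<forall>j < length cs. rsteps R (subst \<sigma> (fst (cs ! j))) (subst \<sigma> (snd (cs ! j)))) \<Longrightarrow>
         rstep R (subst \<sigma> l) (subst \<sigma> r)"
| ctxt: "rstep R s t \<Longrightarrow> rstep R (Fun f (ss @ s # ts)) (Fun f (ss @ t # ts))"
| refl: "rsteps R s s"
| step: "rstep R s u \<Longrightarrow> rsteps R u t \<Longrightarrow> rsteps R s t"

definition irreducible :: "('f, 'v) crule set \<Rightarrow> ('f, 'v) term \<Rightarrow> bool" where
  "irreducible R t \<longleftrightarrow> \<not> (\<exists>u. rstep R t u)"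

definition ctrs_over :: "('f \<times> nat) set \<Rightarrow> ('f, 'v) crule set \<Rightarrow> bool" where
  "ctrs_over F R \<longleftrightarrow> (\<forall>(l, r, cs) \<in> R.
     (\<exists>f ts. l = Fun f ts) \<and>
     funas_term l \<subseteq> F \<and> funas_term r \<subseteq> F \<and>
     (\<forall>j < length cs. funas_term (fst (cs ! j)) \<subseteq> F \<and> funas_term (snd (cs ! j)) \<subseteq> F))"

definition deterministic :: "('f, 'v) crule set \<Rightarrow> bool" where
  "deterministic R \<longleftrightarrow> (\<forall>(l, r, cs) \<in> R. \<forall>i < length cs.
     vars_term (fst (cs ! i)) \<subseteq> vars_term l \<union> (\<Union>j < i. vars_term (snd (cs ! j))))"

definition type3 :: "('f, 'v) crule set \<Rightarrow> bool" where
  "type3 R \<longleftrightarrow> (\<forall>(l, r, cs) \<in> R.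
     vars_term r \<subseteq> vars_term l \<union> (\<Union>j < length cs. vars_term (fst (cs ! j)) \<union> vars_term (snd (cs ! j))))"

definition three_dctrs :: "('f \<times> nat) set \<Rightarrow> ('f, 'v) crule set \<Rightarrow> bool" where
  "three_dctrs F R \<longleftrightarrow> ctrs_over F R \<and> deterministic R \<and> type3 R"

text \<open>Function symbols extended by fresh constants: Inl f is an original symbol, Inr x is the
  fresh constant c_x (distinct variables give distinct constants, none in F).\<close>
definition lift_crule :: "('f, 'v) crule \<Rightarrow> ('f + 'v, 'v) crule" where
  "lift_crule = (\<lambda>(l, r, cs). (map_funs Inl l, map_funs Inl r,
                   map (\<lambda>(s, t). (map_funs Inl s, map_funs Inl t)) cs))"

definition partial_ground :: "'v set \<Rightarrow> ('f, 'v) term \<Rightarrow> ('f + 'v, 'v) term" where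
  "partial_ground V t = subst (\<lambda>x. if x \<in> V then Fun (Inr x) [] else Var x) (map_funs Inl t)"

definition partial_ground_conds ::
  "'v set \<Rightarrow> (('f, 'v) term \<times> ('f, 'v) term) list \<Rightarrow> (('f + 'v, 'v) term \<times> ('f + 'v, 'v) term) list" where
  "partial_ground_conds V cs = map (\<lambda>(s, t). (partial_ground V s, partial_ground V t)) cs"

definition feasible :: "('g \<times> nat) set \<Rightarrow> ('g, 'v) crule set \<Rightarrow> (('g, 'v) term \<times> ('g, 'v) term) list \<Rightarrow> bool" where
  "feasible G R cs \<longleftrightarrow> (\<exists>\<sigma>. (\<forall>x. funas_term (\<sigma> x) \<subseteq> G) \<and>
     (\<forall>j < length cs. rsteps R (subst \<sigma> (fst (cs ! j))) (subst \<sigma> (snd (cs ! j)))))"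

text \<open>The theory R-bar of (F,R), extended by the fresh constants c_x for x \<in> V:
  feasibility of the partial grounding c^{\<down>V}.\<close>
definition ground_feasible :: "('f \<times> nat) set \<Rightarrow> ('f, 'v) crule set \<Rightarrow> 'v set \<Rightarrow>
    (('f, 'v) term \<times> ('f, 'v) term) list \<Rightarrow> bool" where
  "ground_feasible F R V cs \<longleftrightarrow>
     feasible ((\<lambda>(f, n). (Inl f, n)) ` F \<union> {(Inr x, 0) | x. x \<in> V})
              (lift_crule ` R) (partial_ground_conds V cs)"

datatype ('f, 'v) usym = Orig 'f | Usym "('f, 'v) crule" nat

definition U_vars_ok :: "('f, 'v) crule set \<Rightarrow> (('f, 'v) crule \<Rightarrow> nat \<Rightarrow> 'v list) \<Rightarrow> bool" where
  "U_vars_ok R xs \<longleftrightarrow> (\<forall>(l, r, cs) \<in> R. \<forall>i. 1 \<le> i \<and> i \<le> length cs \<longrightarrow>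
     distinct (xs (l, r, cs) i) \<and>
     set (xs (l, r, cs) i) = vars_term l \<union> (\<Union>j < i - 1. vars_term (snd (cs ! j))))"

definition U_trans :: "('f, 'v) crule set \<Rightarrow> (('f, 'v) crule \<Rightarrow> nat \<Rightarrow> 'v list) \<Rightarrow>
    (('f, 'v) usym, 'v) crule set" where
  "U_trans R xs =
     {(map_funs Orig l, map_funs Orig r, []) | l r. (l, r, []) \<in> R}
   \<union> {(map_funs Orig l,
       Fun (Usym (l, r, cs) 1) (map_funs Orig (fst (cs ! 0)) # map Var (xs (l, r, cs) 1)), [])
      | l r cs. (l, r, cs) \<in> R \<and> cs \<noteq> []}
   \<union> {(Fun (Usym (l, r, cs) i) (map_funs Orig (snd (cs ! (i - 1))) # map Var (xs (l, r, cs) i)),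
       Fun (Usym (l, r, cs) (Suc i)) (map_funs Orig (fst (cs ! i)) # map Var (xs (l, r, cs) (Suc i))), [])
      | l r cs i. (l, r, cs) \<in> R \<and> 1 \<le> i \<and> i < length cs}
   \<union> {(Fun (Usym (l, r, cs) (length cs))
         (map_funs Orig (snd (cs ! (length cs - 1))) # map Var (xs (l, r, cs) (length cs))),
       map_funs Orig r, [])
      | l r cs. (l, r, cs) \<in> R \<and> cs \<noteq> []}"

definition U_preserves_irreducibility ::
  "('f \<times> nat) set \<Rightarrow> ('f, 'v) crule set \<Rightarrow> (('f, 'v) crule \<Rightarrow> nat \<Rightarrow> 'v list) \<Rightarrow> bool" where
  "U_preserves_irreducibility F R xs \<longleftrightarrow>
     (\<forall>t. funas_term t \<subseteq> F \<longrightarrow> irreducible R t \<longrightarrow> irreducible (U_trans R xs) (map_funs Orig t))"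

end

theory Submission
  imports Defs
begin

text \<open>Only rules of U(R) whose left-hand side is built from original symbols can rewrite a term
  over F; these are the rules l -> r and l -> U_1(s_1, x_1) coming from rules l -> r <= c of R.
  So if U(R) rewrites t, some instance \<sigma>(l) of a left-hand side of R occurs in t. Feasibility of
  the partial grounding of c on Var(l) yields a derivation in the theory of R extended by the
  fresh constants c_x; replacing every c_x by \<sigma>(x) turns it into a derivation in R itself, i.e.
  into a substitution that agrees with \<sigma> on Var(l) and satisfies c. Hence \<sigma>(l), and thus t,
  is also R-reducible.\<close>

lemma rsteps_trans: "rsteps R s u \<Longrightarrow> rsteps R u t \<Longrightarrow> rsteps R s t"
  by (induction rule: rstep_rsteps.inducts(2)[where ?P1.0="\<lambda>_ _. True"])
     (auto intro: rstep_rsteps.step)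

lemma rsteps_ctxt: "rsteps R s t \<Longrightarrow> rsteps R (Fun f (ss @ s # ts)) (Fun f (ss @ t # ts))"
  by (induction rule: rstep_rsteps.inducts(2)[where ?P1.0="\<lambda>_ _. True"])
     (auto intro: rstep_rsteps.intros)

lemma rstep_imp_rsteps: "rstep R s t \<Longrightarrow> rsteps R s t"
  by (auto intro: rstep_rsteps.step rstep_rsteps.refl)

lemma rstep_arg:
  assumes "rstep R (ts ! n) u" and "n < length ts"
  shows "rstep R (Fun f ts) (Fun f (ts[n := u]))"
  using rstep_rsteps.ctxt[OF assms(1), of f "take n ts" "drop (Suc n) ts"] assms(2)
  by (simp add: id_take_nth_drop[symmetric] upd_conv_take_nth_drop)

lemma subst_cong: "(\<And>x. x \<in> vars_term t \<Longrightarrow> \<sigma> x = \<tau> x) \<Longrightarrow> subst \<sigma> t = subst \<tau> t"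
  by (induction t) auto

lemma subst_subst: "subst \<sigma> (subst \<tau> t) = subst (subst \<sigma> \<circ> \<tau>) t"
  by (induction t) auto

lemma map_funs_subst: "map_funs g (subst \<sigma> t) = subst (map_funs g \<circ> \<sigma>) (map_funs g t)"
  by (induction t) auto

primrec unground :: "('v \<Rightarrow> ('f, 'v) term) \<Rightarrow> ('f + 'v, 'v) term \<Rightarrow> ('f, 'v) term" where
  "unground \<sigma> (Var y) = Var y"
| "unground \<sigma> (Fun f ts) = (case f of Inl g \<Rightarrow> Fun g (map (unground \<sigma>) ts) | Inr x \<Rightarrow> \<sigma> x)"

lemma unground_subst_lift: "unground \<sigma> (subst \<theta> (map_funs Inl t)) = subst (unground \<sigma> \<circ> \<theta>) t"
  by (induction t) auto

lemma rstep_rsteps_unground: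
  "rstep (lift_crule ` R) u v \<Longrightarrow> rsteps R (unground \<sigma> u) (unground \<sigma> v)"
  "rsteps (lift_crule ` R) u v \<Longrightarrow> rsteps R (unground \<sigma> u) (unground \<sigma> v)"
proof (induction rule: rstep_rsteps.inducts)
  case (rule l r cs \<theta>)
  then obtain l0 r0 cs0 where R: "(l0, r0, cs0) \<in> R"
    and l: "l = map_funs Inl l0" and r: "r = map_funs Inl r0"
    and cs: "cs = map (\<lambda>(s, t). (map_funs Inl s, map_funs Inl t)) cs0"
    by (auto simp: lift_crule_def)
  let ?\<tau> = "unground \<sigma> \<circ> \<theta>"
  have "\<forall>j < length cs0. rsteps R (subst ?\<tau> (fst (cs0 ! j))) (subst ?\<tau> (snd (cs0 ! j)))"
    using rule.IH by (auto simp: cs unground_subst_lift split: prod.splits)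
  with R have "rstep R (subst ?\<tau> l0) (subst ?\<tau> r0)"
    by (rule rstep_rsteps.rule)
  then show ?case
    by (simp add: l r unground_subst_lift rstep_imp_rsteps)
next
  case (ctxt s t f ss ts)
  then show ?case
    by (cases f) (auto intro: rsteps_ctxt rstep_rsteps.refl)
next
  case (refl s)
  show ?case by (rule rstep_rsteps.refl)
next
  case (step s u t)
  then show ?case by (blast intro: rsteps_trans)
qed

lemma ground_feasible_imp_reducible:
  assumes "ground_feasible F R (vars_term l) cs" and "(l, r, cs) \<in> R"
  shows "\<exists>v. rstep R (subst \<sigma> l) v"
proof -
  let ?V = "vars_term l"
  from assms(1) obtain \<theta> where \<theta>: "\<forall>j < length (partial_ground_conds ?V cs).
      rsteps (lift_crule ` R) (subst \<theta> (fst (partial_ground_conds ?V cs ! j)))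
        (subst \<theta> (snd (partial_ground_conds ?V cs ! j)))"
    unfolding ground_feasible_def feasible_def by blast
  define \<theta>' where "\<theta>' = (\<lambda>x. if x \<in> ?V then Fun (Inr x) [] else \<theta> x)"
  define \<tau> where "\<tau> = unground \<sigma> \<circ> \<theta>'"
  have ground: "subst \<theta> (partial_ground ?V s) = subst \<theta>' (map_funs Inl s)" for s
    by (simp add: partial_ground_def subst_subst \<theta>'_def comp_def if_distrib cong: if_cong)
  have "\<forall>j < length cs. rsteps R (subst \<tau> (fst (cs ! j))) (subst \<tau> (snd (cs ! j)))"
  proof (intro allI impI)
    fix j assume "j < length cs"
    with \<theta> have "rsteps (lift_crule ` R) (subst \<theta> (partial_ground ?V (fst (cs ! j))))
        (subst \<theta> (partial_ground ?V (snd (cs ! j))))"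
      by (auto simp: partial_ground_conds_def split: prod.splits)
    from rstep_rsteps_unground(2)[OF this, of \<sigma>]
    show "rsteps R (subst \<tau> (fst (cs ! j))) (subst \<tau> (snd (cs ! j)))"
      by (simp add: ground unground_subst_lift \<tau>_def)
  qed
  with assms(2) have "rstep R (subst \<tau> l) (subst \<tau> r)"
    by (rule rstep_rsteps.rule)
  moreover have "subst \<tau> l = subst \<sigma> l"
    by (rule subst_cong) (simp add: \<tau>_def \<theta>'_def)
  ultimately show ?thesis by auto
qed

primrec orig_sym :: "('f, 'v) usym \<Rightarrow> 'f" where
  "orig_sym (Orig f) = f"

lemma orig_sym_map_funs_Orig: "map_funs orig_sym (map_funs Orig t) = t"
  by (induction t) (auto intro: map_idI)

lemma subst_map_funs_Orig_eq:
  assumes "subst \<sigma> (map_funs Orig l) = map_funs Orig t"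
  shows "t = subst (map_funs orig_sym \<circ> \<sigma>) l"
  using arg_cong[OF assms, of "map_funs orig_sym"]
  by (simp add: map_funs_subst orig_sym_map_funs_Orig)

lemma subst_Usym_neq_map_funs_Orig: "subst \<sigma> (Fun (Usym a i) ts) \<noteq> map_funs Orig t"
  by (cases t) auto

lemma U_trans_lhs_cases:
  assumes "(L, r', cs') \<in> U_trans R xs"
  obtains l r cs where "L = map_funs Orig l" and "(l, r, cs) \<in> R"
  | a i ts where "L = Fun (Usym a i) ts"
  using assms unfolding U_trans_def by blast

lemma U_trans_root_step_Orig:
  assumes "\<forall>(l, r, cs) \<in> R. ground_feasible F R (vars_term l) cs"
    and "(L, r', cs') \<in> U_trans R xs" and "subst \<sigma> L = map_funs Orig t"
  shows "\<exists>w. rstep R t w"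
  using assms(2)
proof (cases rule: U_trans_lhs_cases)
  case (1 l r cs)
  with assms(3) have "t = subst (map_funs orig_sym \<circ> \<sigma>) l"
    by (simp add: subst_map_funs_Orig_eq)
  with 1 assms(1) show ?thesis
    using ground_feasible_imp_reducible[of F R l cs r] by auto
next
  case (2 a i ts)
  with assms(3) show ?thesis
    using subst_Usym_neq_map_funs_Orig by metis
qed

lemma rstep_U_trans_Orig_imp_reducible:
  assumes feasible: "\<forall>(l, r, cs) \<in> R. ground_feasible F R (vars_term l) cs"
  shows "rstep (U_trans R xs) u v \<Longrightarrow> u = map_funs Orig t \<Longrightarrow> \<exists>w. rstep R t w"
proof (induction arbitrary: t rule: rstep_rsteps.inducts(1)[where ?P2.0="\<lambda>_ _. True"])
  case (rule L r' cs' \<sigma>)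
  with feasible show ?case
    by (blast intro: U_trans_root_step_Orig)
next
  case (ctxt s u f ss ts)
  then obtain g ts' where t: "t = Fun g ts'" and args: "map (map_funs Orig) ts' = ss @ s # ts"
    by (cases t) auto
  define n where "n = length ss"
  have n: "n < length ts'"
    using arg_cong[OF args, of length] by (simp add: n_def)
  have "s = map_funs Orig (ts' ! n)"
    using arg_cong[OF args, of "\<lambda>xs. xs ! n"] n by (simp add: n_def)
  with ctxt.IH obtain w where "rstep R (ts' ! n) w"
    by blast
  with n t show ?case
    by (blast intro: rstep_arg)
qed auto

theorem proposition30:
  fixes F :: "('f \<times> nat) set" and R :: "('f, 'v) crule set"
    and xs :: "('f, 'v) crule \<Rightarrow> nat \<Rightarrow> 'v list"
  assumes "three_dctrs F R"
    and "\<forall>(l, r, cs) \<in> R. ground_feasible F R (vars_term l) cs"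
    and "U_vars_ok R xs"
  shows "U_preserves_irreducibility F R xs"
  unfolding U_preserves_irreducibility_def irreducible_def
  using rstep_U_trans_Orig_imp_reducible[OF assms(2)] by blast

end
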